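(* Let $G_1$ and $G_2$ be two disjoint $(k+1)$-critical hypergraphs with $k\ge2$, let $\tilde e\in E(G_1)$, let $\tilde v$ be a low vertex of $G_2$, and let $s$ be any admissible map for $(\tilde e,G_2,\tilde v)$. Then $G=S(G_1,\tilde e,G_2,\tilde v,s)$ is $(k+1)$-critical, and $\partial_G(V(G_1))$ is a separating edge set of $G$ of size $k$.
   Context: A hypergraph is a pair $G=(V,E)$ of finite sets with $E\subseteq 2^V$ and $|e|\ge2$ for all $e\in E$. A coloring requires every edge to contain two vertices of different colors; $\chi$ is the chromatic number. $G$ is $(k+1)$-critical if $\chi(G)=k+1$ but $\chi(H)\le k$ for every proper subhypergraph $H$. In a $(k+1)$-critical hypergraph, a low vertex is one of degree exactly $k$ (degree = number of edges containing it). $\partial_G(X)$ is the set of edges meeting both $X$ and $V(G)\setminus X$; $\partial_G(v)=\partial_G(\{v\})$. A separating edge set is $F\subseteq E(G)$ such that $G-F$ has more components than $G$. Splitting: let $G_1,G_2$ be disjoint hypergraphs, $\tilde e\in E(G_1)$, $\tilde v\in V(G_2)$, and $s:\partial_{G_2}(\tilde v)\to 2^{\tilde e}$ a map (called admissible) with $s(e)\ne\varnothing$ for all $e$ and $\bigcup_{e}s(e)=\tilde e$. Then $S(G_1,\tilde e,G_2,\tilde v,s)$ is the hypergraph with vertex set $V(G_1)\cup(V(G_2)\setminus\{\tilde v\})$ and edge set $(E(G_1)\setminus\{\tilde e\})\cup(E(G_2)\setminus\partial_{G_2}(\tilde v))\cup\{(e\setminus\{\tilde v\})\cup s(e): e\in\partial_{G_2}(\tilde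 v)\}$. *)

theory Defs
  imports Main
begin

type_synonym 'a hgraph = "'a set \<times> 'a set set"

definition verts :: "'a hgraph \<Rightarrow> 'a set" where "verts G = fst G"
definition edges :: "'a hgraph \<Rightarrow> 'a set set" where "edges G = snd G"

definition hypergraph :: "'a hgraph \<Rightarrow> bool" where
  "hypergraph G \<longleftrightarrow> finite (verts G) \<and> finite (edges G) \<and> edges G \<subseteq> Pow (verts G)
     \<and> (\<forall>e\<in>edges G. card e \<ge> 2)"

definition colorable :: "'a hgraph \<Rightarrow> nat \<Rightarrow> bool" where
  "colorable G k \<longleftrightarrow> (\<exists>f :: 'a \<Rightarrow> nat. (\<forall>v\<in>verts G. f v < k) \<and>
      (\<forall>e\<in>edges G. \<exists>u\<in>e. \<exists>w\<in>e. f u \<noteq> f w))"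

definition chi :: "'a hgraph \<Rightarrow> nat" where
  "chi G = (LEAST k. colorable G k)"

definition subhypergraph :: "'a hgraph \<Rightarrow> 'a hgraph \<Rightarrow> bool" where
  "subhypergraph H G \<longleftrightarrow> hypergraph H \<and> verts H \<subseteq> verts G \<and> edges H \<subseteq> edges G"

definition critical :: "'a hgraph \<Rightarrow> nat \<Rightarrow> bool" where
  "critical G m \<longleftrightarrow> hypergraph G \<and> chi G = m \<and>
     (\<forall>H. subhypergraph H G \<and> H \<noteq> G \<longrightarrow> chi H < m)"

definition degree :: "'a hgraph \<Rightarrow> 'a \<Rightarrow> nat" where
  "degree G v = card {e \<in> edges G. v \<in> e}"

definition boundary :: "'a hgraph \<Rightarrow> 'a set \<Rightarrow> 'a set set" where
  "boundary G X = {e \<in> edges G. e \<inter> X \<noteq> {} \<and> e \<inter> (verts G - X) \<noteq> {}}"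

definition adj_rel :: "'a hgraph \<Rightarrow> ('a \<times> 'a) set" where
  "adj_rel G = {(u, w). \<exists>e\<in>edges G. u \<in> e \<and> w \<in> e}"

definition conn_rel :: "'a hgraph \<Rightarrow> ('a \<times> 'a) set" where
  "conn_rel G = Id_on (verts G) \<union> (adj_rel G)\<^sup>+"

definition num_components :: "'a hgraph \<Rightarrow> nat" where
  "num_components G = card (verts G // conn_rel G)"

definition delete_edges :: "'a hgraph \<Rightarrow> 'a set set \<Rightarrow> 'a hgraph" where
  "delete_edges G F = (verts G, edges G - F)"

definition separating :: "'a hgraph \<Rightarrow> 'a set set \<Rightarrow> bool" where
  "separating G F \<longleftrightarrow> F \<subseteq> edges G \<and> num_components (delete_edges G F) > num_components G"

definition admissible :: "'a set \<Rightarrow> 'a hgraph \<Rightarrow> 'a \<Rightarrow> ('a set \<Rightarrow> 'a set) \<Rightarrow> bool" where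
  "admissible et G2 vt s \<longleftrightarrow>
     (\<forall>e\<in>boundary G2 {vt}. s e \<noteq> {} \<and> s e \<subseteq> et) \<and> (\<Union>e\<in>boundary G2 {vt}. s e) = et"

definition splitting :: "'a hgraph \<Rightarrow> 'a set \<Rightarrow> 'a hgraph \<Rightarrow> 'a \<Rightarrow> ('a set \<Rightarrow> 'a set) \<Rightarrow> 'a hgraph" where
  "splitting G1 et G2 vt s =
     (verts G1 \<union> (verts G2 - {vt}),
      (edges G1 - {et}) \<union> (edges G2 - boundary G2 {vt}) \<union>
      {(e - {vt}) \<union> s e | e. e \<in> boundary G2 {vt}})"

end

theory Submission
  imports Defs "HOL-Combinatorics.Permutations"
begin

text \<open>
  A k-colouring of the splitting G restricts to a k-colouring of G1 - et, so et is monochromatic,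
  say of colour c; colouring vt with c then turns it into a k-colouring of G2, which is impossible.
  For criticality, G - f must be k-colourable for every edge f. If f comes from G2, glue a
  k-colouring of G1 - et (et monochromatic of colour c) to a k-colouring of G2 - f whose colours
  are permuted so that vt gets colour c. If f comes from G1, take a k-colouring of G1 - f, under
  which et is bichromatic, and a k-colouring of G2 - vt; since vt is low, each colour is carried
  by exactly one of the k edges at vt (minus vt), and a permutation of the colours of G2 can be
  chosen so that each split edge sees a second colour on its part inside et.
  Finally, the edges meeting both V(G1) and its complement are exactly the k split edges, and
  deleting them separates V(G1) from the rest.
\<close>

definition bichromatic :: "('a \<Rightarrow> nat) \<Rightarrow> 'a set \<Rightarrow> bool" where
  "bichromatic f e \<longleftrightarrow> (\<exists>u\<in>e. \<exists>w\<in>e. f u \<noteq> f w)"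

definition is_coloring :: "'a set \<Rightarrow> 'a set set \<Rightarrow> nat \<Rightarrow> ('a \<Rightarrow> nat) \<Rightarrow> bool" where
  "is_coloring V E k f \<longleftrightarrow> (\<forall>v\<in>V. f v < k) \<and> (\<forall>e\<in>E. bichromatic f e)"

lemma colorable_iff_is_coloring: "colorable G k \<longleftrightarrow> (\<exists>f. is_coloring (verts G) (edges G) k f)"
  unfolding colorable_def is_coloring_def bichromatic_def ..

lemma is_coloring_subset:
  "is_coloring V E k f \<Longrightarrow> V' \<subseteq> V \<Longrightarrow> E' \<subseteq> E \<Longrightarrow> is_coloring V' E' k f"
  unfolding is_coloring_def by blast

lemma bichromatic_cong: "(\<And>x. x \<in> e \<Longrightarrow> f x = g x) \<Longrightarrow> bichromatic f e \<longleftrightarrow> bichromatic g e"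
  unfolding bichromatic_def by auto

lemma bichromatic_fun_upd: "v \<notin> e \<Longrightarrow> bichromatic (f(v := c)) e \<longleftrightarrow> bichromatic f e"
  by (rule bichromatic_cong) auto

lemma bichromatic_comp_inj: "inj \<theta> \<Longrightarrow> bichromatic (\<theta> \<circ> f) e \<longleftrightarrow> bichromatic f e"
  unfolding bichromatic_def by (simp add: inj_eq)

lemma bichromatic_two_colors: "u \<in> e \<Longrightarrow> w \<in> e \<Longrightarrow> f u \<noteq> f w \<Longrightarrow> bichromatic f e"
  unfolding bichromatic_def by blast

lemma bichromatic_iff_image: "bichromatic f e \<longleftrightarrow> (\<exists>a\<in>f ` e. \<exists>b\<in>f ` e. a \<noteq> b)"
  unfolding bichromatic_def by blast

lemma bichromatic_image_cong: "f ` A = g ` B \<Longrightarrow> bichromatic f A \<longleftrightarrow> bichromatic g B"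
  by (simp only: bichromatic_iff_image)

lemma bichromatic_replace_vertex:
  assumes "v \<in> e" "S \<noteq> {}" "\<forall>x\<in>S. h x = g v" "\<forall>x\<in>e - {v}. h x = g x"
  shows "bichromatic h (e - {v} \<union> S) \<longleftrightarrow> bichromatic g e"
proof (rule bichromatic_image_cong)
  have "h ` (e - {v}) = g ` (e - {v})" "h ` S = {g v}"
    using assms(2-4) by auto
  moreover have "g ` e = g ` (e - {v}) \<union> {g v}" using assms(1) by blast
  ultimately show "h ` (e - {v} \<union> S) = g ` e" by (simp add: image_Un)
qed

lemma card_ge_two_ex_other: "card e \<ge> 2 \<Longrightarrow> \<exists>u\<in>e. u \<noteq> x"
proof (rule ccontr)
  assume "card e \<ge> 2" "\<not> (\<exists>u\<in>e. u \<noteq> x)"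
  then have "e \<subseteq> {x}" by blast
  then have "card e \<le> 1" using card_mono[of "{x}" e] by simp
  with \<open>card e \<ge> 2\<close> show False by simp
qed

lemma hypergraph_edge:
  "hypergraph G \<Longrightarrow> e \<in> edges G \<Longrightarrow> e \<subseteq> verts G \<and> card e \<ge> 2"
  unfolding hypergraph_def by blast

lemma hypergraph_edge_other_vertex:
  "hypergraph G \<Longrightarrow> e \<in> edges G \<Longrightarrow> \<exists>w\<in>e. w \<noteq> v"
  using hypergraph_edge[of G e] card_ge_two_ex_other[of e v] by blast

lemma colorable_mono: "colorable G k \<Longrightarrow> k \<le> k' \<Longrightarrow> colorable G k'"
  unfolding colorable_def using order_less_le_trans by blast

lemma colorable_exists:
  assumes G: "hypergraph G" shows "\<exists>k. colorable G k"
proof -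
  have "finite (verts G)" using G unfolding hypergraph_def by blast
  then obtain f :: "'a \<Rightarrow> nat" and n where f: "f ` verts G = {i. i < n}" "inj_on f (verts G)"
    using finite_imp_inj_to_nat_seg by blast
  have "bichromatic f e" if e: "e \<in> edges G" for e
  proof -
    obtain u where u: "u \<in> e"
      using hypergraph_edge_other_vertex[OF G e] by blast
    then obtain w where w: "w \<in> e" "w \<noteq> u"
      using hypergraph_edge_other_vertex[OF G e] by blast
    have "u \<in> verts G" "w \<in> verts G" using u w hypergraph_edge[OF G e] by auto
    with w(2) have "f u \<noteq> f w" using inj_onD[OF f(2)] by metis
    with u w(1) show ?thesis by (rule bichromatic_two_colors)
  qed
  moreover have "f v < n" if "v \<in> verts G" for v
    using imageI[OF that, of f] unfolding f(1) by simp
  ultimately have "is_coloring (verts G) (edges G) n f"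
    unfolding is_coloring_def by blast
  then show ?thesis using colorable_iff_is_coloring by blast
qed

lemma colorable_chi: "hypergraph G \<Longrightarrow> colorable G (chi G)"
  unfolding chi_def using colorable_exists by (blast intro: LeastI)

lemma chi_le: "colorable G k \<Longrightarrow> chi G \<le> k"
  unfolding chi_def by (rule Least_le)

lemma chi_less_iff_colorable: "hypergraph G \<Longrightarrow> chi G < k + 1 \<longleftrightarrow> colorable G k"
  using colorable_chi[of G] colorable_mono[of G "chi G" k] chi_le[of G k] by linarith

lemma chi_eqI: "colorable G (k + 1) \<Longrightarrow> \<not> colorable G k \<Longrightarrow> chi G = k + 1"
proof -
  assume col: "colorable G (k + 1)" and ncol: "\<not> colorable G k"
  have "colorable G (chi G)" unfolding chi_def using col by (rule LeastI)
  then have "\<not> chi G \<le> k" using ncol colorable_mono by blast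
  with chi_le[OF col] show ?thesis by simp
qed

lemma critical_not_colorable: "critical G (k + 1) \<Longrightarrow> \<not> colorable G k"
  unfolding critical_def using chi_le by fastforce

lemma critical_proper_part_coloring:
  assumes crit: "critical G (k + 1)"
    and sub: "V \<subseteq> verts G" "E \<subseteq> edges G" "E \<subseteq> Pow V" and proper: "(V, E) \<noteq> G"
  shows "\<exists>f. is_coloring V E k f"
proof -
  have G: "hypergraph G" using crit unfolding critical_def by blast
  have "finite V" "finite E" "\<forall>e\<in>E. card e \<ge> 2"
    using G sub(1,2) finite_subset unfolding hypergraph_def by blast+
  with sub(3) have H: "hypergraph (V, E)"
    unfolding hypergraph_def verts_def edges_def by simp
  moreover have "subhypergraph (V, E) G"
    using H sub unfolding subhypergraph_def verts_def edges_def by simp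
  ultimately have "colorable (V, E) k"
    using crit proper chi_less_iff_colorable unfolding critical_def by blast
  then show ?thesis unfolding colorable_iff_is_coloring verts_def edges_def by simp
qed

lemma critical_delete_edge_coloring:
  assumes "critical G (k + 1)" "e \<in> edges G"
  shows "\<exists>f. is_coloring (verts G) (edges G - {e}) k f"
proof (rule critical_proper_part_coloring[OF assms(1)])
  show "edges G - {e} \<subseteq> Pow (verts G)"
    using assms(1) unfolding critical_def hypergraph_def by blast
  show "(verts G, edges G - {e}) \<noteq> G"
  proof
    assume "(verts G, edges G - {e}) = G"
    then have "edges G - {e} = edges G" by (metis edges_def snd_conv)
    with assms(2) show False by blast
  qed
qed auto

lemma critical_delete_vertex_coloring:
  assumes "critical G (k + 1)" "v \<in> verts G"
  shows "\<exists>f. is_coloring (verts G - {v}) {e \<in> edges G. v \<notin> e} k f"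
proof (rule critical_proper_part_coloring[OF assms(1)])
  show "{e \<in> edges G. v \<notin> e} \<subseteq> Pow (verts G - {v})"
    using assms(1) unfolding critical_def hypergraph_def by blast
  show "(verts G - {v}, {e \<in> edges G. v \<notin> e}) \<noteq> G"
  proof
    assume "(verts G - {v}, {e \<in> edges G. v \<notin> e}) = G"
    then have "verts G - {v} = verts G" by (metis verts_def fst_conv)
    with assms(2) show False by blast
  qed
qed auto

lemma critical_delete_edge_monochromatic:
  assumes "critical G (k + 1)" "is_coloring (verts G) (edges G - {e}) k f"
  shows "\<not> bichromatic f e"
proof
  assume "bichromatic f e"
  with assms(2) have "is_coloring (verts G) (edges G) k f" unfolding is_coloring_def by blast
  then show False using critical_not_colorable[OF assms(1)] colorable_iff_is_coloring by blast
qed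

lemma critical_vertex_in_edge:
  assumes "critical G (k + 1)" "k \<ge> 1" "v \<in> verts G"
  shows "\<exists>e\<in>edges G. v \<in> e"
proof (rule ccontr)
  assume "\<not> ?thesis"
  obtain f where "is_coloring (verts G - {v}) {e \<in> edges G. v \<notin> e} k f"
    using critical_delete_vertex_coloring[OF assms(1,3)] by blast
  with \<open>\<not> ?thesis\<close> have "is_coloring (verts G) (edges G) k (f(v := 0))"
    using assms(2) unfolding is_coloring_def by (auto simp: bichromatic_fun_upd)
  then show False
    using critical_not_colorable[OF assms(1)] colorable_iff_is_coloring by blast
qed

lemma is_coloring_extend_to_edge:
  assumes "hypergraph G" "is_coloring (verts G) (edges G - {e}) k f" "v \<in> e"
  shows "is_coloring (verts G) (edges G) (k + 1) (f(v := k))"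
  unfolding is_coloring_def
proof (intro conjI ballI)
  show "(f(v := k)) u < k + 1" if "u \<in> verts G" for u
    using assms(2) that unfolding is_coloring_def by auto
  show "bichromatic (f(v := k)) e'" if e': "e' \<in> edges G" for e'
  proof (cases "v \<in> e'")
    case True
    obtain w where w: "w \<in> e'" "w \<noteq> v"
      using hypergraph_edge_other_vertex[OF assms(1) e'] by blast
    then have "f w < k"
      using hypergraph_edge[OF assms(1) e'] assms(2) unfolding is_coloring_def by blast
    with w True show ?thesis by (intro bichromatic_two_colors[of w e' v]) auto
  next
    case False
    then have "e' \<noteq> e" using assms(3) by blast
    with False e' assms(2) show ?thesis
      unfolding is_coloring_def by (simp add: bichromatic_fun_upd)
  qed
qed

lemma criticalI:
  assumes G: "hypergraph G" and ncol: "\<not> colorable G k"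
    and covered: "\<forall>v\<in>verts G. \<exists>e\<in>edges G. v \<in> e"
    and del: "\<forall>e\<in>edges G. \<exists>f. is_coloring (verts G) (edges G - {e}) k f"
  shows "critical G (k + 1)"
  unfolding critical_def
proof (intro conjI allI impI)
  show "hypergraph G" by (rule G)
  have "colorable G (k + 1)"
  proof (cases "edges G = {}")
    case True
    then show ?thesis unfolding colorable_def by (intro exI[of _ "\<lambda>_. 0"]) auto
  next
    case False
    then obtain e where e: "e \<in> edges G" by blast
    then obtain v where "v \<in> e"
      using hypergraph_edge_other_vertex[OF G] by blast
    with e del show ?thesis
      using is_coloring_extend_to_edge[OF G] colorable_iff_is_coloring by blast
  qed
  from this ncol show "chi G = k + 1" by (rule chi_eqI)
  fix H assume "subhypergraph H G \<and> H \<noteq> G"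
  then have H: "hypergraph H" "verts H \<subseteq> verts G" "edges H \<subseteq> edges G" "H \<noteq> G"
    unfolding subhypergraph_def by auto
  have "edges H \<noteq> edges G"
  proof
    assume same: "edges H = edges G"
    then have "verts G \<subseteq> verts H"
      using covered H(1) unfolding hypergraph_def by blast
    with same H(2,4) show False
      unfolding verts_def edges_def by (simp add: prod_eq_iff)
  qed
  then obtain e where "e \<in> edges G" "e \<notin> edges H" using H(3) by blast
  then have "colorable H k"
    using del H(2,3) is_coloring_subset colorable_iff_is_coloring
    by (metis Diff_empty subset_Diff_insert)
  then show "chi H < k + 1" using chi_less_iff_colorable[OF H(1)] by blast
qed

text \<open>Swapping the values of a bad point x (with F x = {\<theta> x}) and of a point y with
  F y \<noteq> {\<theta> x} strictly decreases the number of bad points.\<close>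

lemma exists_permutation_avoiding_singletons:
  fixes F :: "'a \<Rightarrow> 'a set"
  assumes S: "finite S" and spread: "\<And>c. \<exists>y\<in>S. \<not> F y \<subseteq> {c}"
  shows "\<exists>\<theta>. \<theta> permutes S \<and> (\<forall>x\<in>S. F x \<noteq> {\<theta> x})"
proof -
  have "\<exists>\<theta>'. \<theta>' permutes S \<and> (\<forall>x\<in>S. F x \<noteq> {\<theta>' x})" if "\<theta> permutes S" for \<theta>
    using that
  proof (induction "card {x\<in>S. F x = {\<theta> x}}" arbitrary: \<theta> rule: less_induct)
    case less
    show ?case
    proof (cases "\<exists>x\<in>S. F x = {\<theta> x}")
      case False
      with less.prems show ?thesis by blast
    next
      case True
      then obtain x where x: "x \<in> S" "F x = {\<theta> x}" by blast
      obtain y where y: "y \<in> S" "\<not> F y \<subseteq> {\<theta> x}" using spread by blast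
      define \<theta>' where "\<theta>' = \<theta> \<circ> transpose x y"
      have perm: "\<theta>' permutes S"
        unfolding \<theta>'_def using less.prems x y by (intro permutes_compose permutes_swap_id)
      have "\<theta> x \<noteq> \<theta> y"
        using x y permutes_inj[OF less.prems] by (metis inj_eq order_refl)
      then have "{z\<in>S. F z = {\<theta>' z}} \<subseteq> {z\<in>S. F z = {\<theta> z}} - {x}"
        using x y by (auto simp: \<theta>'_def transpose_def)
      then have "card {z\<in>S. F z = {\<theta>' z}} < card {z\<in>S. F z = {\<theta> z}}"
        using S x by (intro le_less_trans[OF card_mono card_Diff1_less]) auto
      then show ?thesis using less.hyps perm by blast
    qed
  qed
  then show ?thesis using permutes_id by blast
qed

lemma critical_delete_vertex_forces_colors:
  assumes "critical G (k + 1)" "v \<in> verts G"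
    and g: "is_coloring (verts G - {v}) {e \<in> edges G. v \<notin> e} k g" and "x < k"
  shows "\<exists>e\<in>edges G. v \<in> e \<and> (\<forall>u\<in>e - {v}. g u = x)"
proof (rule ccontr)
  assume none: "\<not> ?thesis"
  have "bichromatic (g(v := x)) e" if e: "e \<in> edges G" for e
  proof (cases "v \<in> e")
    case True
    then obtain u where "u \<in> e - {v}" "g u \<noteq> x" using none e by blast
    with True show ?thesis by (intro bichromatic_two_colors[of u e v]) auto
  next
    case False
    with g e show ?thesis by (simp add: is_coloring_def bichromatic_fun_upd)
  qed
  with g \<open>x < k\<close> have "is_coloring (verts G) (edges G) k (g(v := x))"
    unfolding is_coloring_def by simp
  then show False
    using critical_not_colorable[OF assms(1)] colorable_iff_is_coloring by blast
qed

lemma critical_low_vertex_color_edges: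
  assumes crit: "critical G (k + 1)" and v: "v \<in> verts G" "degree G v = k"
    and g: "is_coloring (verts G - {v}) {e \<in> edges G. v \<notin> e} k g"
  shows "\<exists>E. bij_betw E {..<k} {e \<in> edges G. v \<in> e} \<and> (\<forall>x<k. \<forall>u\<in>E x - {v}. g u = x)"
proof -
  define E where "E x = (SOME e. e \<in> edges G \<and> v \<in> e \<and> (\<forall>u\<in>e - {v}. g u = x))" for x
  have E: "E x \<in> edges G \<and> v \<in> E x \<and> (\<forall>u\<in>E x - {v}. g u = x)" if "x < k" for x
    unfolding E_def
    using someI_ex[OF critical_delete_vertex_forces_colors[OF crit v(1) g that, unfolded Bex_def]] .
  have "inj_on E {..<k}"
  proof (rule inj_onI)
    fix x y assume xy: "x \<in> {..<k}" "y \<in> {..<k}" "E x = E y"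
    have G: "hypergraph G" using crit unfolding critical_def by blast
    obtain u where "u \<in> E x - {v}"
      using hypergraph_edge_other_vertex[OF G] E[of x] xy(1) by blast
    then have "g u = x" "g u = y" using E[of x] E[of y] xy by auto
    then show "x = y" by simp
  qed
  moreover have "E ` {..<k} \<subseteq> {e \<in> edges G. v \<in> e}" using E by auto
  moreover have "finite {e \<in> edges G. v \<in> e}"
    using crit unfolding critical_def hypergraph_def by simp
  ultimately have "E ` {..<k} = {e \<in> edges G. v \<in> e}"
    using v(2) card_image unfolding degree_def by (metis card_lessThan card_subset_eq)
  with \<open>inj_on E {..<k}\<close> E show ?thesis unfolding bij_betw_def by blast
qed

lemma equiv_conn_rel:
  assumes "edges G \<subseteq> Pow (verts G)"
  shows "equiv (verts G) (conn_rel G)"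
proof -
  have adj: "adj_rel G \<subseteq> verts G \<times> verts G" "sym (adj_rel G)"
    using assms unfolding adj_rel_def sym_def by auto
  then have "(adj_rel G)\<^sup>+ \<subseteq> verts G \<times> verts G" "sym ((adj_rel G)\<^sup>+)"
    using trancl_subset_Sigma sym_trancl by blast+
  then show ?thesis
    unfolding conn_rel_def equiv_def refl_on_def sym_def trans_def
    by (auto intro: trancl_trans)
qed

lemma card_quotient_less:
  assumes "finite V" "equiv V R" "equiv V R'" "R' \<subseteq> R"
    and "(u, w) \<in> R" "(u, w) \<notin> R'" "u \<in> V" "w \<in> V"
  shows "card (V // R) < card (V // R')"
proof -
  have coarsen: "R `` (R' `` {x}) = R `` {x}" if "x \<in> V" for x
    using assms(2,4) equiv_class_self[OF assms(3) that] unfolding equiv_def trans_def by blast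
  then have "(\<lambda>C. R `` C) ` (V // R') = V // R"
    unfolding quotient_def by auto
  moreover have "\<not> inj_on (\<lambda>C. R `` C) (V // R')"
  proof
    assume "inj_on (\<lambda>C. R `` C) (V // R')"
    moreover have "R `` (R' `` {u}) = R `` (R' `` {w})"
      using coarsen assms(5,7,8) equiv_class_eq[OF assms(2)] by simp
    ultimately have "R' `` {u} = R' `` {w}"
      using assms(7,8) unfolding inj_on_def quotient_def by blast
    then show False
      using assms(6-8) eq_equiv_class_iff[OF assms(3)] by blast
  qed
  moreover have "finite (V // R')" using finite_quotient assms(1,3) equiv_type by blast
  ultimately show ?thesis
    using card_image_le inj_on_iff_eq_card by (metis le_neq_implies_less)
qed

lemma separating_boundary:
  assumes "hypergraph G" "boundary G X \<noteq> {}"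
  shows "separating G (boundary G X)"
proof -
  let ?G' = "delete_edges G (boundary G X)" and ?V = "verts G"
  have G': "verts ?G' = ?V" "edges ?G' = edges G - boundary G X"
    unfolding delete_edges_def verts_def edges_def by auto
  have pow: "edges G \<subseteq> Pow ?V" using assms(1) unfolding hypergraph_def by blast
  obtain e u w where e: "e \<in> edges G" "u \<in> e \<inter> X" "w \<in> e \<inter> (?V - X)"
    using assms(2) unfolding boundary_def by blast
  have "(u, w) \<in> conn_rel G"
    using e unfolding conn_rel_def adj_rel_def by blast
  define S where "S = (?V \<inter> X) \<times> (?V \<inter> X) \<union> (?V - X) \<times> (?V - X)"
  have "trans S" unfolding S_def trans_def by blast
  have "adj_rel ?G' \<subseteq> S"
  proof
    fix p assume "p \<in> adj_rel ?G'"
    then obtain x y e' where "p = (x, y)" "x \<in> e'" "y \<in> e'" "e' \<in> edges G" "e' \<notin> boundary G X"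
      unfolding adj_rel_def G' by blast
    then show "p \<in> S" using pow unfolding S_def boundary_def by blast
  qed
  then have "(adj_rel ?G')\<^sup>+ \<subseteq> S"
    using trancl_mono_subset trancl_id[OF \<open>trans S\<close>] by metis
  then have "conn_rel ?G' \<subseteq> S" unfolding conn_rel_def G' S_def by auto
  with \<open>(u, w) \<in> conn_rel G\<close> have separated: "(u, w) \<notin> conn_rel ?G'"
    using e unfolding S_def by blast
  have "adj_rel ?G' \<subseteq> adj_rel G" unfolding adj_rel_def G' by blast
  then have finer: "conn_rel ?G' \<subseteq> conn_rel G"
    unfolding conn_rel_def G'(1) using trancl_mono_subset by blast
  have "finite ?V" using assms(1) unfolding hypergraph_def by blast
  moreover have "equiv ?V (conn_rel G)" using pow by (rule equiv_conn_rel)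
  moreover have "equiv ?V (conn_rel ?G')" using equiv_conn_rel[of ?G'] pow unfolding G' by blast
  moreover have "u \<in> ?V" "w \<in> ?V" using e pow by auto
  ultimately have "card (?V // conn_rel G) < card (?V // conn_rel ?G')"
    using finer \<open>(u, w) \<in> conn_rel G\<close> separated by (intro card_quotient_less)
  moreover have "boundary G X \<subseteq> edges G" unfolding boundary_def by blast
  ultimately show ?thesis
    unfolding separating_def num_components_def G'(1) by blast
qed

lemma boundary_singleton:
  assumes "hypergraph G" shows "boundary G {v} = {e \<in> edges G. v \<in> e}"
proof -
  have "e \<inter> (verts G - {v}) \<noteq> {}" if "e \<in> edges G" for e
    using hypergraph_edge_other_vertex[OF assms that, of v] hypergraph_edge[OF assms that] by blast
  then show ?thesis unfolding boundary_def by auto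
qed

locale critical_splitting =
  fixes G1 G2 :: "'a hgraph" and et :: "'a set" and vt :: 'a and s :: "'a set \<Rightarrow> 'a set"
    and k :: nat
  assumes k: "k \<ge> 2"
    and disjoint: "verts G1 \<inter> verts G2 = {}"
    and crit1: "critical G1 (k + 1)"
    and crit2: "critical G2 (k + 1)"
    and et: "et \<in> edges G1"
    and vt: "vt \<in> verts G2"
    and low: "degree G2 vt = k"
    and adm: "admissible et G2 vt s"
begin

abbreviation "G \<equiv> splitting G1 et G2 vt s"
abbreviation "V1 \<equiv> verts G1"
abbreviation "V2 \<equiv> verts G2"
abbreviation "E1 \<equiv> edges G1"
abbreviation "E2 \<equiv> edges G2"
abbreviation "star \<equiv> {e \<in> E2. vt \<in> e}"

definition split_edge :: "'a set \<Rightarrow> 'a set" where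
  "split_edge e = e - {vt} \<union> s e"

lemma hypergraph1: "hypergraph G1" and hypergraph2: "hypergraph G2"
  using crit1 crit2 unfolding critical_def by blast+

lemma boundary_vt: "boundary G2 {vt} = star"
  using boundary_singleton[OF hypergraph2] .

lemma verts_splitting: "verts G = V1 \<union> (V2 - {vt})"
  unfolding splitting_def verts_def by simp

lemma edges_splitting: "edges G = (E1 - {et}) \<union> (E2 - star) \<union> split_edge ` star"
  unfolding splitting_def edges_def split_edge_def boundary_vt by (auto simp: edges_def)

lemma card_star: "card star = k"
  using low unfolding degree_def .

lemma s_star: "e \<in> star \<Longrightarrow> s e \<noteq> {} \<and> s e \<subseteq> et"
  and Union_s_star: "(\<Union>e\<in>star. s e) = et"
  using adm unfolding admissible_def boundary_vt by blast+

lemma et_subset: "et \<subseteq> V1"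
  using hypergraph_edge[OF hypergraph1 et] by blast

lemma star_edge_subset: "e \<in> star \<Longrightarrow> e \<subseteq> V2"
  using hypergraph_edge[OF hypergraph2] by blast

lemma star_edge_other_vertex: "e \<in> star \<Longrightarrow> \<exists>u\<in>e. u \<noteq> vt"
  using hypergraph_edge_other_vertex[OF hypergraph2] by blast

lemma split_edge_inter_V1: "e \<in> star \<Longrightarrow> split_edge e \<inter> V1 = s e"
  using s_star[of e] star_edge_subset[of e] et_subset disjoint unfolding split_edge_def by blast

lemma split_edge_diff_V1: "e \<in> star \<Longrightarrow> split_edge e - V1 = e - {vt}"
  using s_star[of e] star_edge_subset[of e] et_subset disjoint unfolding split_edge_def by blast

lemma inj_on_split_edge: "inj_on split_edge star"
proof (rule inj_onI)
  fix e e' assume e: "e \<in> star" "e' \<in> star" "split_edge e = split_edge e'"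
  then have "e - {vt} = e' - {vt}"
    using split_edge_diff_V1[OF e(1)] split_edge_diff_V1[OF e(2)] by simp
  with e(1,2) show "e = e'" by blast
qed

lemma split_edge_subset: "e \<in> star \<Longrightarrow> split_edge e \<subseteq> verts G"
  using s_star[of e] star_edge_subset[of e] et_subset unfolding split_edge_def verts_splitting by blast

lemma hypergraph_splitting: "hypergraph G"
  unfolding hypergraph_def
proof (intro conjI ballI)
  show "finite (verts G)"
    using hypergraph1 hypergraph2 unfolding verts_splitting hypergraph_def by blast
  show "finite (edges G)"
    using hypergraph1 hypergraph2 unfolding edges_splitting hypergraph_def by simp
  have "e \<subseteq> verts G \<and> card e \<ge> 2" if e: "e \<in> edges G" for e
  proof -
    consider "e \<in> E1" | "e \<in> E2 - star" | e' where "e' \<in> star" "e = split_edge e'"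
      using e unfolding edges_splitting by blast
    then show ?thesis
    proof cases
      case 1
      then show ?thesis using hypergraph_edge[OF hypergraph1] unfolding verts_splitting by blast
    next
      case 2
      then show ?thesis using hypergraph_edge[OF hypergraph2] unfolding verts_splitting by blast
    next
      case 3
      obtain u where u: "u \<in> e' - {vt}" using star_edge_other_vertex[OF 3(1)] by blast
      obtain w where w: "w \<in> s e'" using s_star[OF 3(1)] by blast
      have "e \<subseteq> verts G" using split_edge_subset[OF 3(1)] 3(2) by simp
      moreover have "finite e"
        using calculation \<open>finite (verts G)\<close> finite_subset by blast
      moreover have "u \<in> e" "w \<in> e" using u w 3(2) unfolding split_edge_def by blast+
      moreover have "u \<noteq> w"
        using u w s_star[OF 3(1)] et_subset star_edge_subset[OF 3(1)] disjoint by blast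
      ultimately show ?thesis
        using card_mono[of e "{u, w}"] by auto
    qed
  qed
  then show "edges G \<subseteq> Pow (verts G)" "\<And>e. e \<in> edges G \<Longrightarrow> 2 \<le> card e" by blast+
qed

lemma et_monochromatic:
  assumes "is_coloring V1 (E1 - {et}) k f"
  obtains c where "c < k" "\<forall>x\<in>et. f x = c"
proof -
  obtain a where a: "a \<in> et" using hypergraph_edge_other_vertex[OF hypergraph1 et] by blast
  have "\<forall>x\<in>et. f x = f a"
    using critical_delete_edge_monochromatic[OF crit1 assms] a unfolding bichromatic_def by blast
  moreover have "f a < k" using assms a et_subset unfolding is_coloring_def by blast
  ultimately show ?thesis using that by blast
qed

lemma splitting_not_colorable: "\<not> colorable G k"
proof
  assume "colorable G k"
  then obtain f where f: "is_coloring (verts G) (edges G) k f"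
    using colorable_iff_is_coloring by blast
  then have "is_coloring V1 (E1 - {et}) k f"
    by (rule is_coloring_subset) (auto simp: verts_splitting edges_splitting)
  then obtain c where c: "c < k" "\<forall>x\<in>et. f x = c" by (rule et_monochromatic)
  have "bichromatic (f(vt := c)) e" if e: "e \<in> E2" for e
  proof (cases "vt \<in> e")
    case True
    then have "bichromatic f (split_edge e)"
      using f e unfolding is_coloring_def edges_splitting by blast
    moreover have "\<forall>x\<in>s e. f x = (f(vt := c)) vt" using c(2) s_star[of e] e True by auto
    ultimately show ?thesis
      using bichromatic_replace_vertex[of vt e "s e" f "f(vt := c)"] s_star[of e] e True
      unfolding split_edge_def by auto
  next
    case False
    then show ?thesis
      using f e bichromatic_fun_upd[OF False] unfolding is_coloring_def edges_splitting by blast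
  qed
  moreover have "(f(vt := c)) v < k" if "v \<in> V2" for v
    using f c(1) that unfolding is_coloring_def verts_splitting by auto
  ultimately have "colorable G2 k"
    unfolding colorable_iff_is_coloring is_coloring_def by blast
  then show False using critical_not_colorable[OF crit2] by blast
qed

definition glue :: "('a \<Rightarrow> nat) \<Rightarrow> ('a \<Rightarrow> nat) \<Rightarrow> 'a \<Rightarrow> nat" where
  "glue g1 g2 v = (if v \<in> V1 then g1 v else g2 v)"

lemma glue_V1: "v \<in> V1 \<Longrightarrow> glue g1 g2 v = g1 v"
  and glue_V2: "v \<in> V2 \<Longrightarrow> glue g1 g2 v = g2 v"
  unfolding glue_def using disjoint by auto

lemma bichromatic_glue1: "e \<subseteq> V1 \<Longrightarrow> bichromatic (glue g1 g2) e \<longleftrightarrow> bichromatic g1 e"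
  using glue_V1 by (intro bichromatic_cong) blast

lemma bichromatic_glue2: "e \<subseteq> V2 \<Longrightarrow> bichromatic (glue g1 g2) e \<longleftrightarrow> bichromatic g2 e"
  using glue_V2 by (intro bichromatic_cong) blast

lemma glue_less:
  "\<forall>v\<in>V1. g1 v < k \<Longrightarrow> \<forall>v\<in>V2 - {vt}. g2 v < k \<Longrightarrow> \<forall>v\<in>verts G. glue g1 g2 v < k"
  unfolding glue_def verts_splitting by auto

text \<open>The colours of G2 - e0 are transposed so that vt receives the colour of et; every split
  edge then carries the colours of its parent edge in G2.\<close>

lemma coloring_delete_E2_edge:
  assumes e0: "e0 \<in> E2"
  shows "\<exists>h. is_coloring (verts G) ((E1 - {et}) \<union> (E2 - star - {e0}) \<union> split_edge ` (star - {e0})) k h"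
proof -
  obtain g1 where g1: "is_coloring V1 (E1 - {et}) k g1"
    using critical_delete_edge_coloring[OF crit1 et] by blast
  then obtain c where c: "c < k" "\<forall>x\<in>et. g1 x = c" by (rule et_monochromatic)
  obtain g2 where g2: "is_coloring V2 (E2 - {e0}) k g2"
    using critical_delete_edge_coloring[OF crit2 e0] by blast
  define g where "g = transpose c (g2 vt) \<circ> g2"
  have "g vt = c" unfolding g_def by simp
  have "g2 vt < k" using g2 vt unfolding is_coloring_def by blast
  then have g_less: "\<forall>v\<in>V2. g v < k"
    using g2 c(1) unfolding g_def is_coloring_def by (auto simp: transpose_def)
  have g_edges: "\<forall>e\<in>E2 - {e0}. bichromatic g e"
    using g2 bichromatic_comp_inj[OF inj_transpose] unfolding g_def is_coloring_def by blast
  let ?h = "glue g1 g"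
  have "bichromatic ?h (split_edge e)" if e: "e \<in> star - {e0}" for e
  proof -
    have "s e \<subseteq> et" using s_star[of e] e by blast
    then have "\<forall>x\<in>s e. ?h x = g vt"
      using et_subset c(2) glue_V1[of _ g1 g] \<open>g vt = c\<close> by (metis in_mono)
    moreover have "\<forall>x\<in>e - {vt}. ?h x = g x"
      using star_edge_subset[of e] e glue_V2 by auto
    ultimately show ?thesis
      using bichromatic_replace_vertex[of vt e "s e" ?h g] s_star[of e] e g_edges
      unfolding split_edge_def by auto
  qed
  moreover have "bichromatic ?h e" if "e \<in> E1 - {et}" for e
    using that g1 hypergraph_edge[OF hypergraph1, of e] bichromatic_glue1[of e g1 g]
    unfolding is_coloring_def by blast
  moreover have "bichromatic ?h e" if "e \<in> E2 - star - {e0}" for e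
    using that g_edges hypergraph_edge[OF hypergraph2, of e] bichromatic_glue2[of e g1 g] by blast
  moreover have "\<forall>v\<in>verts G. ?h v < k"
    using g1 g_less unfolding is_coloring_def by (intro glue_less) auto
  ultimately show ?thesis unfolding is_coloring_def by blast
qed

lemma permutation_avoiding_star_palettes:
  assumes "bichromatic g1 et" "E ` {..<k} = star"
  shows "\<exists>\<theta>. \<theta> permutes {..<k} \<and> (\<forall>x\<in>{..<k}. g1 ` s (E x) \<noteq> {\<theta> x})"
proof (rule exists_permutation_avoiding_singletons[OF finite_lessThan])
  fix c
  obtain a where "a \<in> et" "g1 a \<noteq> c"
    using assms(1) unfolding bichromatic_def by metis
  moreover obtain e where "e \<in> star" "a \<in> s e"
    using \<open>a \<in> et\<close> Union_s_star by blast
  moreover have "e \<in> E ` {..<k}" using \<open>e \<in> star\<close> assms(2) by simp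
  ultimately show "\<exists>y\<in>{..<k}. \<not> g1 ` s (E y) \<subseteq> {c}" by blast
qed

text \<open>Under the glued colouring the part E x - {vt} of a split edge has the single colour \<theta> x,
  so \<theta> is chosen to avoid the palette of its other part s (E x) whenever that palette is a
  single colour.\<close>

lemma coloring_delete_E1_edge:
  assumes f0: "f0 \<in> E1" "f0 \<noteq> et"
  shows "\<exists>h. is_coloring (verts G) ((E1 - {et, f0}) \<union> (E2 - star) \<union> split_edge ` star) k h"
proof -
  obtain g1 where g1: "is_coloring V1 (E1 - {f0}) k g1"
    using critical_delete_edge_coloring[OF crit1 f0(1)] by blast
  then have "bichromatic g1 et" using f0(2) et unfolding is_coloring_def by blast
  obtain g where g: "is_coloring (V2 - {vt}) {e \<in> E2. vt \<notin> e} k g"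
    using critical_delete_vertex_coloring[OF crit2 vt] by blast
  then obtain E where E: "bij_betw E {..<k} star" "\<forall>x<k. \<forall>u\<in>E x - {vt}. g u = x"
    using critical_low_vertex_color_edges[OF crit2 vt low] by blast
  obtain \<theta> where \<theta>: "\<theta> permutes {..<k}" "\<forall>x\<in>{..<k}. g1 ` s (E x) \<noteq> {\<theta> x}"
    using permutation_avoiding_star_palettes[OF \<open>bichromatic g1 et\<close> bij_betw_imp_surj_on[OF E(1)]]
    by blast
  let ?h = "glue g1 (\<theta> \<circ> g)"
  have "bichromatic ?h (split_edge e)" if e: "e \<in> star" for e
  proof -
    have "e \<in> E ` {..<k}" using e bij_betw_imp_surj_on[OF E(1)] by simp
    then obtain x where x: "x < k" "e = E x" by blast
    obtain u where u: "u \<in> e - {vt}" using star_edge_other_vertex[OF e] by blast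
    then have "?h u = \<theta> x"
      using E(2) x star_edge_subset[OF e] glue_V2[of u g1 "\<theta> \<circ> g"] by auto
    moreover obtain w where w: "w \<in> s e" "g1 w \<noteq> \<theta> x"
    proof (rule ccontr)
      assume "\<not> thesis"
      with that have "\<forall>w\<in>s e. g1 w = \<theta> x" by blast
      moreover have "s e \<noteq> {}" using s_star[OF e] by blast
      ultimately have "g1 ` s e = {\<theta> x}" by auto
      with \<theta>(2) x show False by auto
    qed
    moreover have "?h w = g1 w"
      using w(1) s_star[OF e] et_subset glue_V1[of w g1 "\<theta> \<circ> g"] by blast
    ultimately show ?thesis
      using u w(1) unfolding split_edge_def by (intro bichromatic_two_colors[of u _ w]) auto
  qed
  moreover have "bichromatic ?h e" if "e \<in> E1 - {et, f0}" for e
    using that g1 hypergraph_edge[OF hypergraph1, of e] bichromatic_glue1[of e g1 "\<theta> \<circ> g"]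
    unfolding is_coloring_def by blast
  moreover have "bichromatic ?h e" if "e \<in> E2 - star" for e
  proof -
    have "bichromatic g e" using that g unfolding is_coloring_def by blast
    then show ?thesis
      using that hypergraph_edge[OF hypergraph2, of e] bichromatic_glue2[of e g1 "\<theta> \<circ> g"]
        bichromatic_comp_inj[OF permutes_inj[OF \<theta>(1)], of g e] by blast
  qed
  moreover have "\<forall>v\<in>V2 - {vt}. (\<theta> \<circ> g) v < k"
    using g permutes_in_image[OF \<theta>(1)] unfolding is_coloring_def by auto
  with g1 have "\<forall>v\<in>verts G. ?h v < k"
    unfolding is_coloring_def by (intro glue_less) auto
  ultimately show ?thesis unfolding is_coloring_def by blast
qed

lemma splitting_delete_edge_coloring:
  assumes "f0 \<in> edges G"
  shows "\<exists>h. is_coloring (verts G) (edges G - {f0}) k h"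
proof -
  consider "f0 \<in> E1 - {et}" | "f0 \<in> E2 - star" | e0 where "e0 \<in> star" "f0 = split_edge e0"
    using assms unfolding edges_splitting by blast
  then show ?thesis
  proof cases
    case 1
    have sub: "edges G - {f0} \<subseteq> (E1 - {et, f0}) \<union> (E2 - star) \<union> split_edge ` star"
      unfolding edges_splitting by blast
    obtain h where "is_coloring (verts G) ((E1 - {et, f0}) \<union> (E2 - star) \<union> split_edge ` star) k h"
      using coloring_delete_E1_edge 1 by blast
    from this sub have "is_coloring (verts G) (edges G - {f0}) k h"
      by (rule is_coloring_subset[OF _ order_refl])
    then show ?thesis by (rule exI[where x = h])
  next
    case 2
    have sub: "edges G - {f0} \<subseteq> (E1 - {et}) \<union> (E2 - star - {f0}) \<union> split_edge ` (star - {f0})"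
      using 2 unfolding edges_splitting by blast
    obtain h where
      "is_coloring (verts G) ((E1 - {et}) \<union> (E2 - star - {f0}) \<union> split_edge ` (star - {f0})) k h"
      using coloring_delete_E2_edge 2 by blast
    from this sub have "is_coloring (verts G) (edges G - {f0}) k h"
      by (rule is_coloring_subset[OF _ order_refl])
    then show ?thesis by (rule exI[where x = h])
  next
    case 3
    have "split_edge ` (star - {e0}) = split_edge ` star - {f0}"
      using inj_on_image_set_diff[OF inj_on_split_edge, of star "{e0}"] 3 by auto
    then have sub: "edges G - {f0} \<subseteq> (E1 - {et}) \<union> (E2 - star - {e0}) \<union> split_edge ` (star - {e0})"
      using 3(1) unfolding edges_splitting by blast
    obtain h where
      "is_coloring (verts G) ((E1 - {et}) \<union> (E2 - star - {e0}) \<union> split_edge ` (star - {e0})) k h"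
      using coloring_delete_E2_edge 3(1) by blast
    from this sub have "is_coloring (verts G) (edges G - {f0}) k h"
      by (rule is_coloring_subset[OF _ order_refl])
    then show ?thesis by (rule exI[where x = h])
  qed
qed

lemma splitting_vertex_in_edge:
  assumes v: "v \<in> verts G" shows "\<exists>e\<in>edges G. v \<in> e"
proof -
  have "k \<ge> 1" using k by simp
  have split_edge_in: "split_edge e \<in> edges G" if "e \<in> star" for e
    using that unfolding edges_splitting by blast
  show ?thesis
  proof (cases "v \<in> V1")
    case True
    then obtain e where e: "e \<in> E1" "v \<in> e"
      using critical_vertex_in_edge[OF crit1 \<open>k \<ge> 1\<close>] by blast
    show ?thesis
    proof (cases "e = et")
      case True
      then obtain e' where "e' \<in> star" "v \<in> s e'" using e(2) Union_s_star by blast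
      then show ?thesis using split_edge_in unfolding split_edge_def by blast
    next
      case False
      with e show ?thesis unfolding edges_splitting by blast
    qed
  next
    case False
    with v have "v \<in> V2 - {vt}" unfolding verts_splitting by blast
    then obtain e where e: "e \<in> E2" "v \<in> e"
      using critical_vertex_in_edge[OF crit2 \<open>k \<ge> 1\<close>] by blast
    show ?thesis
    proof (cases "vt \<in> e")
      case True
      have "v \<in> split_edge e" using e(2) \<open>v \<in> V2 - {vt}\<close> unfolding split_edge_def by blast
      with split_edge_in[of e] e(1) True show ?thesis by blast
    next
      case False
      with e(1) have "e \<in> edges G" unfolding edges_splitting by blast
      with e(2) show ?thesis by blast
    qed
  qed
qed

lemma splitting_critical: "critical G (k + 1)"
  using hypergraph_splitting splitting_not_colorable splitting_vertex_in_edge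
    splitting_delete_edge_coloring by (intro criticalI) blast+

lemma boundary_splitting: "boundary G V1 = split_edge ` star"
proof
  show "boundary G V1 \<subseteq> split_edge ` star"
  proof
    fix e assume e: "e \<in> boundary G V1"
    then have "e \<in> edges G" "e \<inter> V1 \<noteq> {}" "\<not> e \<subseteq> V1"
      unfolding boundary_def by blast+
    moreover have "e \<subseteq> V1" if "e \<in> E1" using hypergraph_edge[OF hypergraph1 that] by blast
    moreover have "e \<inter> V1 = {}" if "e \<in> E2"
      using hypergraph_edge[OF hypergraph2 that] disjoint by blast
    ultimately show "e \<in> split_edge ` star" unfolding edges_splitting by blast
  qed
  show "split_edge ` star \<subseteq> boundary G V1"
  proof
    fix e assume "e \<in> split_edge ` star"
    then obtain e' where e': "e' \<in> star" "e = split_edge e'" by blast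
    obtain u where "u \<in> e' - {vt}" using star_edge_other_vertex[OF e'(1)] by blast
    then have "u \<in> e \<inter> (verts G - V1)"
      using e' split_edge_diff_V1[OF e'(1)] star_edge_subset[OF e'(1)] unfolding verts_splitting by blast
    moreover have "e \<inter> V1 \<noteq> {}" using e' split_edge_inter_V1[OF e'(1)] s_star[OF e'(1)] by simp
    moreover have "e \<in> edges G" using e' unfolding edges_splitting by blast
    ultimately show "e \<in> boundary G V1" unfolding boundary_def by blast
  qed
qed

lemma card_boundary_splitting: "card (boundary G V1) = k"
  unfolding boundary_splitting card_image[OF inj_on_split_edge] by (rule card_star)

lemma splitting_separating: "separating G (boundary G V1)"
proof (rule separating_boundary[OF hypergraph_splitting])
  show "boundary G V1 \<noteq> {}" using card_boundary_splitting k by auto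
qed

end

theorem theorem15:
  fixes G1 G2 :: "'a hgraph" and et :: "'a set" and vt :: 'a and s :: "'a set \<Rightarrow> 'a set"
    and k :: nat
  assumes "k \<ge> 2"
    and "verts G1 \<inter> verts G2 = {}"
    and "critical G1 (k + 1)"
    and "critical G2 (k + 1)"
    and "et \<in> edges G1"
    and "vt \<in> verts G2"
    and "degree G2 vt = k"
    and "admissible et G2 vt s"
  shows "critical (splitting G1 et G2 vt s) (k + 1)
       \<and> separating (splitting G1 et G2 vt s) (boundary (splitting G1 et G2 vt s) (verts G1))
       \<and> card (boundary (splitting G1 et G2 vt s) (verts G1)) = k"
proof -
  interpret critical_splitting G1 G2 et vt s k
    using assms by unfold_locales
  show ?thesis
    using splitting_critical splitting_separating card_boundary_splitting by blast
qed

end
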